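(* Let $(X,d)$ be an Atsuji space and $f:X\to X$ a closed mapping. If there exists $x_0\in X$ such that $\liminf_{n\to\infty} d(f^n(x_0),f^{n+1}(x_0))=0$, then $f$ has a fixed point.
   Context: A metric space $(X,d)$ is an Atsuji space if for each open cover $\mathcal{U}$ of $X$ there exists $\varepsilon>0$ such that for every $x\in X$ the open ball $B_d(x,\varepsilon)$ is contained in some element of $\mathcal{U}$. A mapping is closed if it maps closed sets to closed sets (continuity is not assumed). $f^n$ denotes the $n$-fold iterate of $f$. *)

theory Defs
  imports "HOL-Analysis.Analysis"
begin

text \<open>The whole type 'a (a metric space) is the space X. Atsuji space: every open
cover has a uniform Lebesgue number.\<close>
definition atsuji_space :: "'a::metric_space itself \<Rightarrow> bool" where
  "atsuji_space _ \<longleftrightarrow>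
     (\<forall>\<U> :: 'a set set. (\<forall>U\<in>\<U>. open U) \<and> \<Union>\<U> = UNIV \<longrightarrow>
        (\<exists>e>0. \<forall>x. \<exists>U\<in>\<U>. ball x e \<subseteq> U))"

definition closed_mapping :: "('a::topological_space \<Rightarrow> 'b::topological_space) \<Rightarrow> bool" where
  "closed_mapping f \<longleftrightarrow> (\<forall>S. closed S \<longrightarrow> closed (f ` S))"

end

theory Submission
  imports Defs
begin

(* Suppose f has no fixed point and let x n = f^n x0, so that the steps d(x n, x (n+1)) are
   frequently arbitrarily small; such an orbit cannot be eventually periodic, so x is injective.
   If some point p is approached by orbit points x n with small steps d(x n, x (n+1)), then
   {p} together with those x n is compact, hence closed, so its f-image is closed; the image
   contains the corresponding x (n+1), which also converge to p, hence it contains p, and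
   injectivity leaves only p = f p.  Otherwise every p has a radius E p such that, from some
   index N p on, every orbit point within E p of p takes a step of length at least E p.
   Shrinking these balls to exclude f p and the finitely many earlier orbit points other than
   p gives an open cover, and a Lebesgue number of it is a uniform lower bound for all steps. *)

lemma frequently_less_of_Liminf_less:
  fixes X :: "'b \<Rightarrow> 'a::complete_linorder"
  assumes "Liminf F X < y"
  shows "\<exists>\<^sub>F x in F. X x < y"
proof (rule ccontr)
  assume "\<not> (\<exists>\<^sub>F x in F. X x < y)"
  then have "\<forall>\<^sub>F x in F. y \<le> X x"
    by (simp add: not_frequently not_less)
  then have "y \<le> Liminf F X"
    by (rule Liminf_bounded)
  with assms show False
    by simp
qed

lemma orbit_tail_in_cycle:
  assumes orbit: "\<And>n. x (Suc n) = f (x n)"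
    and "i < j" and "x i = x j" and "i \<le> n"
  shows "\<exists>k\<in>{i..<j}. x n = x k"
  using \<open>i \<le> n\<close>
proof (induction n rule: dec_induct)
  case base
  then show ?case
    using \<open>i < j\<close> by auto
next
  case (step n)
  then obtain k where k: "k \<in> {i..<j}" "x n = x k"
    by blast
  show ?case
  proof (cases "Suc k < j")
    case True
    then show ?thesis
      using k orbit by (metis atLeastLessThan_iff le_Suc_eq)
  next
    case False
    then have "Suc k = j"
      using k by auto
    then show ?thesis
      using k orbit \<open>i < j\<close> \<open>x i = x j\<close> by (metis atLeastLessThan_iff order_refl)
  qed
qed

lemma inj_orbit_if_small_steps:
  fixes x :: "nat \<Rightarrow> 'a::metric_space"
  assumes orbit: "\<And>n. x (Suc n) = f (x n)"
    and no_fix: "\<And>y. f y \<noteq> y"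
    and small: "\<And>e. e > 0 \<Longrightarrow> \<exists>\<^sub>F n in sequentially. dist (x n) (x (Suc n)) < e"
  shows "inj x"
proof (rule ccontr)
  assume "\<not> inj x"
  then obtain i j where "i < j" "x i = x j"
    unfolding inj_def by (metis linorder_neqE_nat)
  define D where "D = (\<lambda>k. dist (x k) (x (Suc k))) ` {i..<j}"
  have "finite D" "D \<noteq> {}"
    using \<open>i < j\<close> by (auto simp: D_def)
  have "\<forall>d\<in>D. d > 0"
    by (auto simp: D_def orbit) (metis no_fix)
  then have "Min D > 0"
    using \<open>finite D\<close> \<open>D \<noteq> {}\<close> by simp
  then obtain n where "n \<ge> i" "dist (x n) (x (Suc n)) < Min D"
    using small[of "Min D"] unfolding frequently_sequentially by blast
  moreover obtain k where "k \<in> {i..<j}" "x n = x k"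
    using orbit_tail_in_cycle[OF orbit \<open>i < j\<close> \<open>x i = x j\<close> \<open>n \<ge> i\<close>] by blast
  then have "dist (x n) (x (Suc n)) \<in> D"
    unfolding D_def by (auto simp: orbit)
  ultimately show False
    using \<open>finite D\<close> by (meson Min_le not_le)
qed

lemma closed_mapping_fixpoint_of_limit:
  fixes f :: "'a::t2_space \<Rightarrow> 'a"
  assumes "closed_mapping f"
    and "s \<longlonglongrightarrow> p" and "(\<lambda>k. f (s k)) \<longlonglongrightarrow> p" and "\<And>k. f (s k) \<noteq> p"
  shows "f p = p"
proof -
  have "compactin euclidean (insert p (range s))"
    using assms(2) by (intro compactin_sequence_with_limit) (auto simp: limitin_canonical_iff)
  then have "closed (f ` insert p (range s))"
    using \<open>closed_mapping f\<close> compact_imp_closed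
    unfolding closed_mapping_def compactin_euclidean_iff by blast
  then have "p \<in> f ` insert p (range s)"
    by (intro Lim_in_closed_set[OF _ _ _ assms(3)]) auto
  then show ?thesis
    using assms(4) by auto
qed

lemma fixpoint_of_small_step_cluster_point:
  fixes x :: "nat \<Rightarrow> 'a::metric_space"
  assumes "closed_mapping f"
    and orbit: "\<And>n. x (Suc n) = f (x n)"
    and "inj x"
    and cluster: "\<And>e. e > 0 \<Longrightarrow>
      \<exists>\<^sub>F n in sequentially. dist (x n) p < e \<and> dist (x n) (x (Suc n)) < e"
  shows "f p = p"
proof -
  have "finite (x -` {p})"
    using \<open>inj x\<close> by (simp add: finite_vimageI)
  then have "\<forall>\<^sub>F n in cofinite. x n \<noteq> p"
    by (simp add: eventually_cofinite vimage_def)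
  then have "\<forall>\<^sub>F n in sequentially. x n \<noteq> p"
    by (simp only: cofinite_eq_sequentially)
  then have eventually_off_p: "\<forall>\<^sub>F n in sequentially. x (Suc n) \<noteq> p"
    by (rule eventually_sequentially_Suc[THEN iffD2])
  have "\<exists>n. dist (x n) p < inverse (Suc k) \<and> dist (x n) (x (Suc n)) < inverse (Suc k)
      \<and> x (Suc n) \<noteq> p" for k
  proof -
    have "\<exists>\<^sub>F n in sequentially. x (Suc n) \<noteq> p \<and>
        dist (x n) p < inverse (Suc k) \<and> dist (x n) (x (Suc n)) < inverse (Suc k)"
      by (rule frequently_eventually_conj[OF cluster]) (simp_all add: eventually_off_p)
    then show ?thesis
      by (auto dest: frequently_ex)
  qed
  then obtain m where m: "\<And>k. dist (x (m k)) p < inverse (Suc k)"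
    "\<And>k. dist (x (m k)) (x (Suc (m k))) < inverse (Suc k)" "\<And>k. x (Suc (m k)) \<noteq> p"
    by metis
  have "dist (x (Suc (m k))) p < 2 * inverse (Suc k)" for k
    using m(1)[of k] m(2)[of k] dist_triangle3[of "x (Suc (m k))" p "x (m k)"] by linarith
  then have "(\<lambda>k. x (Suc (m k))) \<longlonglongrightarrow> p"
    by (subst tendsto_dist_iff)
      (auto simp: less_imp_le intro!: Lim_null_comparison[OF _
        tendsto_mult_right_zero[OF LIMSEQ_inverse_real_of_nat, of 2]])
  then have lim_f: "(\<lambda>k. f (x (m k))) \<longlonglongrightarrow> p"
    by (simp only: orbit)
  have lim: "(\<lambda>k. x (m k)) \<longlonglongrightarrow> p"
    using m(1) by (subst tendsto_dist_iff)
      (auto intro!: Lim_null_comparison[OF _ LIMSEQ_inverse_real_of_nat] simp: less_imp_le)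
  show ?thesis
    using m(3) by (intro closed_mapping_fixpoint_of_limit[OF \<open>closed_mapping f\<close> lim lim_f])
      (simp add: orbit)
qed

lemma atsuji_space_uniform_ball:
  assumes "atsuji_space TYPE('a::metric_space)"
    and "\<And>p::'a. open (U p)" and "\<And>p. p \<in> U p"
  shows "\<exists>e>0. \<forall>y. \<exists>p. ball y e \<subseteq> U p"
proof -
  have "\<exists>e>0. \<forall>y. \<exists>V\<in>range U. ball y e \<subseteq> V"
    using assms(1) unfolding atsuji_space_def
    by (elim allE[of _ "range U"]) (use assms(2,3) in blast)
  then show ?thesis
    by blast
qed

lemma atsuji_orbit_steps_bounded_below:
  fixes x :: "nat \<Rightarrow> 'a::metric_space"
  assumes "atsuji_space TYPE('a)"
    and orbit: "\<And>n. x (Suc n) = f (x n)"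
    and no_fix: "\<And>y. f y \<noteq> y"
    and isolated: "\<And>p. \<exists>e>0. \<forall>\<^sub>F n in sequentially.
      dist (x n) p < e \<longrightarrow> e \<le> dist (x n) (x (Suc n))"
  shows "\<exists>e>0. \<forall>n. e \<le> dist (x n) (x (Suc n))"
proof -
  obtain E N where E: "\<And>p. E p > 0"
    and EN: "\<And>p n. N p \<le> n \<Longrightarrow> dist (x n) p < E p \<Longrightarrow> E p \<le> dist (x n) (x (Suc n))"
    using isolated unfolding eventually_sequentially by metis
  define U where "U p = ball p (min (E p / 3) (dist p (f p) / 2)) - (x ` {..<N p} - {p})" for p
  have "open (U p)" for p
    unfolding U_def by (intro open_Diff finite_imp_closed) auto
  moreover have "p \<in> U p" for p
    using E[of p] no_fix[of p] unfolding U_def by auto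
  ultimately obtain e where "e > 0" and e: "\<And>y. \<exists>p. ball y e \<subseteq> U p"
    using atsuji_space_uniform_ball[OF assms(1)] by metis
  have "e \<le> dist (x n) (x (Suc n))" for n
  proof (rule ccontr)
    assume "\<not> e \<le> dist (x n) (x (Suc n))"
    then have "dist (x n) (x (Suc n)) < e"
      by simp
    moreover obtain p where "ball (x n) e \<subseteq> U p"
      using e by blast
    ultimately have in_U: "x n \<in> U p" "x (Suc n) \<in> U p"
      using \<open>e > 0\<close> by auto
    then have near: "dist p (x n) < E p / 3" "dist p (x (Suc n)) < E p / 3"
      unfolding U_def by auto
    show False
    proof (cases "n < N p")
      case True
      then have "x n = p"
        using in_U(1) unfolding U_def by auto
      then show False
        using in_U(2) unfolding U_def by (auto simp: orbit)
    next
      case False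
      moreover have "dist (x n) p < E p"
        using near(1) E[of p] by (simp add: dist_commute)
      ultimately have "E p \<le> dist (x n) (x (Suc n))"
        by (simp add: EN)
      moreover have "dist (x n) (x (Suc n)) \<le> dist p (x n) + dist p (x (Suc n))"
        by (rule dist_triangle3)
      ultimately show False
        using near E[of p] by linarith
    qed
  qed
  then show ?thesis
    using \<open>e > 0\<close> by blast
qed

lemma fixpoint_of_orbit_with_small_steps:
  fixes x :: "nat \<Rightarrow> 'a::metric_space"
  assumes "atsuji_space TYPE('a)" and "closed_mapping f"
    and orbit: "\<And>n. x (Suc n) = f (x n)"
    and small: "\<And>e. e > 0 \<Longrightarrow> \<exists>\<^sub>F n in sequentially. dist (x n) (x (Suc n)) < e"
  shows "\<exists>p. f p = p"
proof (rule ccontr)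
  assume "\<nexists>p. f p = p"
  then have no_fix: "\<And>y. f y \<noteq> y"
    by blast
  show False
  proof (cases "\<exists>p. \<forall>e>0. \<exists>\<^sub>F n in sequentially. dist (x n) p < e \<and> dist (x n) (x (Suc n)) < e")
    case True
    then obtain p where "\<And>e. e > 0 \<Longrightarrow>
        \<exists>\<^sub>F n in sequentially. dist (x n) p < e \<and> dist (x n) (x (Suc n)) < e"
      by blast
    then have "f p = p"
      using fixpoint_of_small_step_cluster_point[OF assms(2) orbit
          inj_orbit_if_small_steps[OF orbit no_fix small]] by blast
    with no_fix show False
      by blast
  next
    case False
    have "\<exists>e>0. \<forall>\<^sub>F n in sequentially. dist (x n) p < e \<longrightarrow> e \<le> dist (x n) (x (Suc n))"
      for p
    proof -
      obtain e where "e > 0"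
        "\<not> (\<exists>\<^sub>F n in sequentially. dist (x n) p < e \<and> dist (x n) (x (Suc n)) < e)"
        using False by blast
      then show ?thesis
        by (auto simp: not_frequently elim!: eventually_mono)
    qed
    then obtain e where "e > 0" "\<And>n. e \<le> dist (x n) (x (Suc n))"
      using atsuji_orbit_steps_bounded_below[of x f, OF assms(1) orbit no_fix] by blast
    with small[of e] show False
      by (meson frequently_ex not_le)
  qed
qed

theorem corollary7:
  fixes f :: "'a::metric_space \<Rightarrow> 'a" and x0 :: 'a
  assumes "atsuji_space TYPE('a)"
    and "closed_mapping f"
    and "liminf (\<lambda>n. ereal (dist ((f ^^ n) x0) ((f ^^ Suc n) x0))) = 0"
  shows "\<exists>x. f x = x"
proof (rule fixpoint_of_orbit_with_small_steps[OF assms(1,2)])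
  show "(f ^^ Suc n) x0 = f ((f ^^ n) x0)" for n
    by simp
  fix e :: real
  assume "e > 0"
  with assms(3) have "liminf (\<lambda>n. ereal (dist ((f ^^ n) x0) ((f ^^ Suc n) x0))) < ereal e"
    by simp
  then show "\<exists>\<^sub>F n in sequentially. dist ((f ^^ n) x0) ((f ^^ Suc n) x0) < e"
    using frequently_less_of_Liminf_less by fastforce
qed

end
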